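(* Let $\{(\mathbf{x}^n,\mathbf{Z}^n,\Gamma^n)\}$ be generated by the SPULTRA iteration defined in the context (with exact image update) from some initialization with $\mathbf{x}^0\in\mathcal{X}$. Suppose a subsequence $\{(\mathbf{x}^{q_m},\mathbf{Z}^{q_m-1},\Gamma^{q_m-1})\}_m$ converges to $(\mathbf{x}^*,\mathbf{Z}^{**},\Gamma^{**})$. Then $\{\mathbf{x}^{q_m-1}\}_m$ also converges to $\mathbf{x}^*$, and $\mathbf{x}^*$ is the unique minimizer over $\mathbf{x}$ of $F(\mathbf{x},\mathbf{Z}^{**},\Gamma^{**};\mathbf{x}^* )$.
   Context: Data and model. $\mathbf{A}\in\mathbb{R}^{N_d\times N_p}$ is a matrix with nonnegative entries; write $l_i(\mathbf{x})=[\mathbf{A}\mathbf{x}]_i$. Constants: $I_0>0$, $\sigma^2\ge 0$, measurements $Y_i\in\mathbb{R}$, coefficients $s_{1_i},s_{2_i}\in\mathbb{R}$, $x_{\max}>0$. Let $f_i(l)=s_{1_i}l+s_{2_i}l^2$ and $$h_i(l)=\big(I_0e^{-f_i(l)}+\sigma^2\big)-Y_i\log\big(I_0e^{-f_i(l)}+\sigma^2\big),\qquad \mathsf{L}(\mathbf{x})=\sum_{i=1}^{N_d}h_i(l_i(\mathbf{x})).$$ Let $\mathcal{X}=\{\mathbf{x}\in\mathbb{R}^{N_p}:0\le x_j\le x_{\max}\ \forall j\}$ and $\mathfrak{X}(\mathbf{x})=0$ if $\mathbf{x}\in\mathcal{X}$, $+\infty$ otherwise. Regularizer. For $j=1,\dots,\tilde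 N$, $\mathbf{P}_j\in\mathbb{R}^{v\times N_p}$ extracts the $j$-th patch of $v$ voxels (a row-selection matrix); assume every voxel belongs to at least one patch. $\boldsymbol{\Omega}_1,\dots,\boldsymbol{\Omega}_K\in\mathbb{R}^{v\times v}$ are fixed nonsingular (pre-learned) transforms. Weights $\tau_j>0$, and $\beta>0$, $\gamma_c>0$. Variables: sparse code matrix $\mathbf{Z}=[\mathbf{z}_1,\dots,\mathbf{z}_{\tilde N}]$ with $\mathbf{z}_j\in\mathbb{R}^v$, and class vector $\Gamma\in\{1,\dots,K\}^{\tilde N}$. Define $$\mathsf{R}(\mathbf{x},\mathbf{Z},\Gamma)=\beta\sum_{j=1}^{\tilde N}\tau_j\Big(\|\boldsymbol{\Omega}_{\Gamma_j}\mathbf{P}_j\mathbf{x}-\mathbf{z}_j\|_2^2+\gamma_c^2\|\mathbf{z}_j\|_0\Big),$$ where $\|\cdot\|_0$ counts nonzero entries. The objective is $G(\mathbf{x},\mathbf{Z},\Gamma)=\mathsf{L}(\mathbf{x})+\mathsf{R}(\mathbf{x},\mathbf{Z},\Gamma)+\mathfrak{X}(\mathbf{x})$. Surrogates. Curvature functions $c_i:[0,\infty)\to(0,\infty)$ are continuous and chosen so that, with $$q_i(l;\bar l)=h_i(\bar l)+\dot h_i(\bar l)(l-\bar l)+\tfrac12 c_i(\bar l)(l-\bar l)^2,$$ one has $h_i(l)\le q_i(l;\bar l)$ for all $l\ge0$, $\bar l\ge 0$ (as achieved by the optimum-curvature rule $c_i(\bar l)=2\,[h_i(0)-h_i(\bar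 l)+\bar l\,\dot h_i(\bar l)]/\bar l^2$ for $\bar l>0$, $c_i(0)=\ddot h_i(0)$, with nonpositive values replaced by a small positive constant). For $\bar{\mathbf{x}}\in\mathcal{X}$ define the majorizer $$F(\mathbf{x},\mathbf{Z},\Gamma;\bar{\mathbf{x}})=\sum_{i=1}^{N_d}q_i\big(l_i(\mathbf{x});l_i(\bar{\mathbf{x}})\big)+\mathsf{R}(\mathbf{x},\mathbf{Z},\Gamma)+\mathfrak{X}(\mathbf{x}).$$ SPULTRA iteration (exact version). Given $(\mathbf{x}^n,\mathbf{Z}^n,\Gamma^n)$: image update $\mathbf{x}^{n+1}\in\arg\min_{\mathbf{x}}F(\mathbf{x},\mathbf{Z}^n,\Gamma^n;\mathbf{x}^n)$; then sparse coding and clustering $(\mathbf{Z}^{n+1},\Gamma^{n+1})\in\arg\min_{\mathbf{Z},\Gamma}\mathsf{R}(\mathbf{x}^{n+1},\mathbf{Z},\Gamma)$ (computed exactly: for each $j$, $\Gamma_j^{n+1}$ minimizes over $k$ the value $\|\boldsymbol{\Omega}_k\mathbf{P}_j\mathbf{x}^{n+1}-H_{\gamma_c}(\boldsymbol{\Omega}_k\mathbf{P}_j\mathbf{x}^{n+1})\|_2^2+\gamma_c^2\|H_{\gamma_c}(\boldsymbol{\Omega}_k\mathbf{P}_j\mathbf{x}^{n+1})\|_0$ and $\mathbf{z}_j^{n+1}=H_{\gamma_c}(\boldsymbol{\Omega}_{\Gamma_j^{n+1}}\mathbf{P}_j\mathbf{x}^{n+1})$, where $H_{\gamma_c}$ zeroes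 entries of magnitude less than $\gamma_c$ and keeps the others). *)

theory Defs
  imports "HOL-Analysis.Analysis"
begin

text \<open>SPULTRA setting. Index types: 'p voxels (N_p), 'd detector bins (N_d),
  'v voxels per patch (v), 'j patches (tilde N), 'k classes (K).\<close>

definition Xset :: "real \<Rightarrow> (real^'p) set" where
  "Xset xmax = {x. \<forall>c. 0 \<le> x $ c \<and> x $ c \<le> xmax}"

definition lproj :: "real^'p^'d \<Rightarrow> real^'p \<Rightarrow> 'd \<Rightarrow> real" where
  "lproj A x i = (A *v x) $ i"

definition hfun :: "real \<Rightarrow> real \<Rightarrow> real \<Rightarrow> real \<Rightarrow> real \<Rightarrow> real \<Rightarrow> real" where
  "hfun I0 sig2 Y s1 s2 l =
     (I0 * exp (- (s1 * l + s2 * l^2)) + sig2) - Y * ln (I0 * exp (- (s1 * l + s2 * l^2)) + sig2)"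

definition Lfun :: "real \<Rightarrow> real \<Rightarrow> ('d::finite \<Rightarrow> real) \<Rightarrow> ('d \<Rightarrow> real) \<Rightarrow> ('d \<Rightarrow> real)
    \<Rightarrow> real^'p^'d \<Rightarrow> real^'p \<Rightarrow> real" where
  "Lfun I0 sig2 Y s1 s2 A x = (\<Sum>i\<in>UNIV. hfun I0 sig2 (Y i) (s1 i) (s2 i) (lproj A x i))"

definition qsurr :: "real \<Rightarrow> real \<Rightarrow> real \<Rightarrow> real \<Rightarrow> real \<Rightarrow> (real \<Rightarrow> real)
    \<Rightarrow> real \<Rightarrow> real \<Rightarrow> real" where
  "qsurr I0 sig2 Y s1 s2 cc l lb =
     hfun I0 sig2 Y s1 s2 lb + deriv (hfun I0 sig2 Y s1 s2) lb * (l - lb)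
       + 1/2 * cc lb * (l - lb)^2"

definition l0 :: "real^'v \<Rightarrow> nat" where
  "l0 z = card {r. z $ r \<noteq> 0}"

definition Rfun :: "real \<Rightarrow> ('j::finite \<Rightarrow> real) \<Rightarrow> ('k \<Rightarrow> real^'v^'v) \<Rightarrow> ('j \<Rightarrow> real^'p^'v)
    \<Rightarrow> real \<Rightarrow> real^'p \<Rightarrow> ('j \<Rightarrow> real^'v) \<Rightarrow> ('j \<Rightarrow> 'k) \<Rightarrow> real" where
  "Rfun beta tau Om P gc x Z Gam =
     beta * (\<Sum>j\<in>UNIV. tau j * ((norm (Om (Gam j) *v (P j *v x) - Z j))^2 + gc^2 * real (l0 (Z j))))"

text \<open>Majorizer F on the box Xset (the indicator term is rendered by restricting to Xset)\<close>
definition Fmaj :: "real \<Rightarrow> real \<Rightarrow> ('d::finite \<Rightarrow> real) \<Rightarrow> ('d \<Rightarrow> real) \<Rightarrow> ('d \<Rightarrow> real)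
    \<Rightarrow> ('d \<Rightarrow> real \<Rightarrow> real) \<Rightarrow> real^'p^'d
    \<Rightarrow> real \<Rightarrow> ('j::finite \<Rightarrow> real) \<Rightarrow> ('k \<Rightarrow> real^'v^'v) \<Rightarrow> ('j \<Rightarrow> real^'p^'v) \<Rightarrow> real
    \<Rightarrow> real^'p \<Rightarrow> ('j \<Rightarrow> real^'v) \<Rightarrow> ('j \<Rightarrow> 'k) \<Rightarrow> real^'p \<Rightarrow> real" where
  "Fmaj I0 sig2 Y s1 s2 c A beta tau Om P gc x Z Gam xb =
     (\<Sum>i\<in>UNIV. qsurr I0 sig2 (Y i) (s1 i) (s2 i) (c i) (lproj A x i) (lproj A xb i))
     + Rfun beta tau Om P gc x Z Gam"

end

theory Submission
  imports Defs
begin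

text \<open>Minimizing the majorizer over the box is minimizing a convex quadratic, so the exact image
  update lowers it by at least its curvature form evaluated at the step. The majorizer touches
  \<open>L\<close> at the expansion point and dominates it, and sparse coding cannot increase \<open>R\<close>; hence
  \<open>L + R\<close> decreases along the iteration by at least that curvature term. The curvature form is
  coercive uniformly in the expansion point (the patches cover every voxel and the transforms are
  invertible) and \<open>L + R\<close> is bounded below on the compact box, so successive iterates become
  arbitrarily close and \<open>x (q m - 1)\<close> shares the limit of \<open>x (q m)\<close>. Passing to the limit in
  the minimality of \<open>x (q m)\<close> shows that \<open>x*\<close> minimizes \<open>F(\<cdot>, Z**, \<Gamma>**; x*)\<close>, and coercivity
  of the curvature form makes that minimizer unique.\<close>

lemma Xset_eq_cbox: "Xset xmax = cbox 0 (vec xmax)"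
  by (auto simp: Xset_def mem_box_cart)

lemma compact_Xset: "compact (Xset xmax)"
  by (simp add: Xset_eq_cbox)

lemma convex_Xset: "convex (Xset xmax)"
  by (simp add: Xset_eq_cbox)

lemma lproj_segment: "lproj A ((1-t) *\<^sub>R x + t *\<^sub>R y) i = (1-t) * lproj A x i + t * lproj A y i"
  by (simp add: lproj_def matrix_vector_right_distrib matrix_vector_mult_scaleR)

lemma lproj_diff: "lproj A (y - x) i = lproj A y i - lproj A x i"
  by (simp add: lproj_def matrix_vector_mult_diff_distrib)

lemma lproj_nonneg:
  assumes "\<forall>i col. 0 \<le> A $ i $ col" "x \<in> Xset xmax"
  shows "0 \<le> lproj A x i"
  using assms by (auto simp: lproj_def matrix_vector_mult_def Xset_def intro!: sum_nonneg)

lemma continuous_lproj: "continuous_on S (\<lambda>x. lproj A x i)"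
  unfolding lproj_def by (intro continuous_intros)

lemma tendsto_lproj: "a \<longlonglongrightarrow> a0 \<Longrightarrow> (\<lambda>m. lproj A (a m) i) \<longlonglongrightarrow> lproj A a0 i"
  unfolding lproj_def
  by (intro tendsto_vec_nth bounded_linear.tendsto[OF matrix_vector_mul_bounded_linear])

lemma power2_norm_segment:
  fixes a b :: "'a::real_inner"
  shows "(norm ((1-t) *\<^sub>R a + t *\<^sub>R b))^2 = (1-t)*(norm a)^2 + t*(norm b)^2 - t*(1-t)*(norm (b - a))^2"
  by (simp add: power2_norm_eq_inner inner_commute algebra_simps)

lemma power2_segment:
  fixes a b t :: real
  shows "((1-t)*a + t*b)^2 = (1-t)*a^2 + t*b^2 - t*(1-t)*(b - a)^2"
  using power2_norm_segment[of t a b] by simp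

lemma segment_minimizer_gap:
  fixes f :: "'a::real_vector \<Rightarrow> real"
  assumes "convex S" "x \<in> S" "y \<in> S" and min: "\<forall>w\<in>S. f x \<le> f w"
    and segment: "\<And>t. f ((1-t) *\<^sub>R x + t *\<^sub>R y) = (1-t) * f x + t * f y - t*(1-t)*C"
  shows "f x + C \<le> f y"
proof -
  have "(1-t) * C \<le> f y - f x" if "0 < t" "t < 1" for t
  proof -
    have "f x \<le> f ((1-t) *\<^sub>R x + t *\<^sub>R y)"
      using min assms(1-3) that by (simp add: convex_alt)
    then have "0 \<le> t * (f y - f x - (1-t)*C)"
      unfolding segment by (simp add: algebra_simps)
    then show ?thesis using that by (simp add: zero_le_mult_iff)
  qed
  then have "\<forall>\<^sub>F t in at_right 0. (1-t) * C \<le> f y - f x"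
    using eventually_at_right_real[of 0 1] by (auto elim: eventually_mono)
  moreover have "((\<lambda>t. (1-t) * C) \<longlongrightarrow> C) (at_right 0)"
    by (auto intro!: tendsto_eq_intros)
  ultimately have "C \<le> f y - f x"
    by (intro tendsto_le[OF trivial_limit_at_right_real tendsto_const]) auto
  then show ?thesis by simp
qed

lemma invertible_matrices_bounded_below:
  fixes M :: "'k::finite \<Rightarrow> real^'n^'n"
  assumes "\<forall>k. invertible (M k)"
  obtains B where "B > 0" "\<And>k v. B * norm v \<le> norm (M k *v v)"
proof -
  have "\<exists>B>0. \<forall>v. B * norm v \<le> norm (M k *v v)" for k
    using linear_inj_bounded_below_pos[OF matrix_vector_mul_linear inj_matrix_vector_mult] assms
    by metis
  then obtain b where b: "\<And>k. b k > 0" "\<And>k v. b k * norm v \<le> norm (M k *v v)" by metis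
  show ?thesis
  proof
    show "Min (range b) > 0" using b(1) by simp
    show "Min (range b) * norm v \<le> norm (M k *v v)" for k v
      using b(2)[of k v] mult_right_mono[of "Min (range b)" "b k" "norm v"] by simp
  qed
qed

lemma descent_gaps_tendsto_zero:
  fixes G C :: "nat \<Rightarrow> real"
  assumes descent: "\<And>n. G (Suc n) + C n \<le> G n" and nonneg: "\<And>n. 0 \<le> C n"
    and bounded: "\<And>n. lb \<le> G n"
  shows "C \<longlonglongrightarrow> 0"
proof -
  have "decseq G"
  proof (rule decseq_SucI)
    show "G (Suc n) \<le> G n" for n using descent[of n] nonneg[of n] by linarith
  qed
  then obtain Glim where "G \<longlonglongrightarrow> Glim"
    using decseq_convergent[of G lb] bounded by blast
  then have "(\<lambda>n. G n - G (Suc n)) \<longlonglongrightarrow> Glim - Glim"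
    by (intro tendsto_diff LIMSEQ_Suc)
  then have gaps: "(\<lambda>n. G n - G (Suc n)) \<longlonglongrightarrow> 0"
    by simp
  have gap_le: "C n \<le> G n - G (Suc n)" for n
    using descent[of n] by linarith
  show ?thesis
  proof (rule tendsto_sandwich[OF _ _ tendsto_const gaps])
    show "\<forall>\<^sub>F n in sequentially. 0 \<le> C n" using nonneg by (intro always_eventually allI)
    show "\<forall>\<^sub>F n in sequentially. C n \<le> G n - G (Suc n)" using gap_le by (intro always_eventually allI)
  qed
qed

text \<open>Half the Hessian form of the quadratic \<open>x \<mapsto> Fmaj \<dots> x Z Gam xb\<close>, in the direction \<open>d\<close>.\<close>
definition Fmaj_curv :: "('d::finite \<Rightarrow> real \<Rightarrow> real) \<Rightarrow> real^'p^'d \<Rightarrow> real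
    \<Rightarrow> ('j::finite \<Rightarrow> real) \<Rightarrow> ('k \<Rightarrow> real^'v^'v) \<Rightarrow> ('j \<Rightarrow> real^'p^'v)
    \<Rightarrow> real^'p \<Rightarrow> ('j \<Rightarrow> 'k) \<Rightarrow> real^'p \<Rightarrow> real" where
  "Fmaj_curv c A beta tau Om P xb Gam d =
    (\<Sum>i\<in>UNIV. 1/2 * c i (lproj A xb i) * (lproj A d i)^2)
    + beta * (\<Sum>j\<in>UNIV. tau j * (norm (Om (Gam j) *v (P j *v d)))^2)"

lemma qsurr_segment:
  "qsurr I0 sig2 Y s1 s2 cc ((1-t) * l + t * l') lb =
   (1-t) * qsurr I0 sig2 Y s1 s2 cc l lb + t * qsurr I0 sig2 Y s1 s2 cc l' lb
   - t*(1-t) * (1/2 * cc lb * (l' - l)^2)"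
proof -
  have shift: "(1-t) * l + t * l' - lb = (1-t) * (l - lb) + t * (l' - lb)"
    by (simp add: algebra_simps)
  have square: "((1-t) * (l - lb) + t * (l' - lb))^2
      = (1-t) * (l - lb)^2 + t * (l' - lb)^2 - t*(1-t) * (l' - l)^2"
    using power2_segment[of t "l - lb" "l' - lb"] by simp
  show ?thesis
    unfolding qsurr_def shift square by (simp add: field_simps)
qed

lemma Fmaj_segment:
  "Fmaj I0 sig2 Y s1 s2 c A beta tau Om P gc ((1-t) *\<^sub>R x + t *\<^sub>R y) Z Gam xb =
   (1-t) * Fmaj I0 sig2 Y s1 s2 c A beta tau Om P gc x Z Gam xb
   + t * Fmaj I0 sig2 Y s1 s2 c A beta tau Om P gc y Z Gam xb
   - t*(1-t) * Fmaj_curv c A beta tau Om P xb Gam (y - x)"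
proof -
  have sq: "(norm (Om (Gam j) *v (P j *v ((1-t) *\<^sub>R x + t *\<^sub>R y)) - Z j))^2
     = (1-t) * (norm (Om (Gam j) *v (P j *v x) - Z j))^2 + t * (norm (Om (Gam j) *v (P j *v y) - Z j))^2
       - t*(1-t) * (norm (Om (Gam j) *v (P j *v (y - x))))^2" for j
  proof -
    have "Om (Gam j) *v (P j *v ((1-t) *\<^sub>R x + t *\<^sub>R y)) - Z j =
       (1-t) *\<^sub>R (Om (Gam j) *v (P j *v x) - Z j) + t *\<^sub>R (Om (Gam j) *v (P j *v y) - Z j)"
      by (simp add: algebra_simps)
    moreover have "(Om (Gam j) *v (P j *v y) - Z j) - (Om (Gam j) *v (P j *v x) - Z j)
        = Om (Gam j) *v (P j *v (y - x))"
      by (simp add: matrix_vector_mult_diff_distrib)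
    ultimately show ?thesis by (simp only: power2_norm_segment)
  qed
  show ?thesis
    unfolding Fmaj_def Rfun_def Fmaj_curv_def lproj_segment lproj_diff qsurr_segment sq
    by (simp add: sum.distrib sum_subtractf sum_distrib_left algebra_simps)
qed

lemma Fmaj_minimizer_gap:
  assumes "a \<in> Xset xmax" "b \<in> Xset xmax"
    and "\<forall>w\<in>Xset xmax. Fmaj I0 sig2 Y s1 s2 c A beta tau Om P gc a Z Gam xb
                        \<le> Fmaj I0 sig2 Y s1 s2 c A beta tau Om P gc w Z Gam xb"
  shows "Fmaj I0 sig2 Y s1 s2 c A beta tau Om P gc a Z Gam xb + Fmaj_curv c A beta tau Om P xb Gam (b - a)
         \<le> Fmaj I0 sig2 Y s1 s2 c A beta tau Om P gc b Z Gam xb"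
  by (rule segment_minimizer_gap[OF convex_Xset assms Fmaj_segment])

lemma Fmaj_self:
  "Fmaj I0 sig2 Y s1 s2 c A beta tau Om P gc y Z Gam y
   = Lfun I0 sig2 Y s1 s2 A y + Rfun beta tau Om P gc y Z Gam"
  unfolding Fmaj_def Lfun_def qsurr_def by simp

text \<open>The \<open>\<ell>\<^sub>0\<close> penalty is discontinuous in the codes but independent of the image, so limits
  are taken in the majorizer with \<open>gc = 0\<close>.\<close>
lemma Fmaj_eq_smooth_plus_sparsity:
  "Fmaj I0 sig2 Y s1 s2 c A beta tau Om P gc y Z Gam xb
   = Fmaj I0 sig2 Y s1 s2 c A beta tau Om P 0 y Z Gam xb + beta * (\<Sum>j\<in>UNIV. tau j * gc^2 * real (l0 (Z j)))"
  unfolding Fmaj_def Rfun_def by (simp add: sum.distrib algebra_simps)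

definition hfun_deriv :: "real \<Rightarrow> real \<Rightarrow> real \<Rightarrow> real \<Rightarrow> real \<Rightarrow> real \<Rightarrow> real" where
  "hfun_deriv I0 sig2 Y s1 s2 l =
     - I0 * exp (- (s1 * l + s2 * l^2)) * (s1 + 2 * s2 * l)
       * (1 - Y / (I0 * exp (- (s1 * l + s2 * l^2)) + sig2))"

lemma hfun_has_real_derivative:
  assumes "I0 > 0" "sig2 \<ge> 0"
  shows "(hfun I0 sig2 Y s1 s2 has_real_derivative hfun_deriv I0 sig2 Y s1 s2 l) (at l)"
proof -
  have "I0 * exp (- (s1 * l + s2 * l^2)) + sig2 > 0" using assms by (simp add: add_pos_nonneg)
  then show ?thesis
    unfolding hfun_def[abs_def] hfun_deriv_def
    by (auto intro!: derivative_eq_intros simp: power2_eq_square field_simps)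
qed

lemma deriv_hfun:
  assumes "I0 > 0" "sig2 \<ge> 0"
  shows "deriv (hfun I0 sig2 Y s1 s2) = hfun_deriv I0 sig2 Y s1 s2"
  using DERIV_imp_deriv[OF hfun_has_real_derivative[OF assms]] by blast

lemma isCont_hfun_deriv:
  assumes "I0 > 0" "sig2 \<ge> 0"
  shows "isCont (hfun_deriv I0 sig2 Y s1 s2) l"
proof -
  have "I0 * exp (- (s1 * l + s2 * l^2)) + sig2 \<noteq> 0"
    using assms by (metis add_pos_nonneg exp_gt_zero less_irrefl mult_pos_pos)
  then show ?thesis unfolding hfun_deriv_def[abs_def] by (intro continuous_intros) auto
qed

locale spultra_model =
  fixes A :: "real^'p^'d" and I0 sig2 :: real and Y s1 s2 :: "'d::finite \<Rightarrow> real"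
    and c :: "'d \<Rightarrow> real \<Rightarrow> real" and beta :: real and tau :: "'j::finite \<Rightarrow> real"
    and Om :: "'k::finite \<Rightarrow> real^'v^'v" and P :: "'j \<Rightarrow> real^'p^'v" and gc xmax :: real
  assumes A_nonneg: "\<forall>i col. 0 \<le> A $ i $ col"
    and I0_pos: "I0 > 0" and sig2_nonneg: "sig2 \<ge> 0"
    and beta_pos: "beta > 0" and tau_pos: "\<forall>j. tau j > 0"
    and P_cover: "\<forall>col. \<exists>j r. P j $ r = axis col 1"
    and Om_inv: "\<forall>k. invertible (Om k)"
    and c_cont: "\<forall>i. continuous_on {0..} (c i)"
    and c_pos: "\<forall>i l. 0 \<le> l \<longrightarrow> c i l > 0"
    and c_major: "\<forall>i l lb. 0 \<le> l \<longrightarrow> 0 \<le> lb \<longrightarrow>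
        hfun I0 sig2 (Y i) (s1 i) (s2 i) l \<le> qsurr I0 sig2 (Y i) (s1 i) (s2 i) (c i) l lb"
begin

abbreviation "X \<equiv> Xset xmax"
abbreviation "F \<equiv> Fmaj I0 sig2 Y s1 s2 c A beta tau Om P gc"
abbreviation "F0 \<equiv> Fmaj I0 sig2 Y s1 s2 c A beta tau Om P 0"
abbreviation "L \<equiv> Lfun I0 sig2 Y s1 s2 A"
abbreviation "R \<equiv> Rfun beta tau Om P gc"
abbreviation "curv \<equiv> Fmaj_curv c A beta tau Om P"

lemma curv_ge_transform_term:
  assumes "xb \<in> X"
  shows "beta * (\<Sum>j\<in>UNIV. tau j * (norm (Om (Gam j) *v (P j *v d)))^2) \<le> curv xb Gam d"
proof -
  have "0 < c i (lproj A xb i)" for i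
    using c_pos lproj_nonneg[OF A_nonneg assms] by blast
  then have "0 \<le> (\<Sum>i\<in>UNIV. 1/2 * c i (lproj A xb i) * (lproj A d i)^2)"
    by (intro sum_nonneg) (simp add: less_imp_le)
  then show ?thesis unfolding Fmaj_curv_def by simp
qed

lemma curv_ge_coordinate: "\<exists>\<kappa>>0. \<forall>xb\<in>X. \<forall>Gam d col. \<kappa> * (d $ col)^2 \<le> curv xb Gam d"
proof -
  obtain B where B: "B > 0" "\<And>k v. B * norm v \<le> norm (Om k *v v)"
    using invertible_matrices_bounded_below[OF Om_inv] by blast
  define tmin where "tmin = Min (range tau)"
  have tmin: "tmin > 0" "\<And>j. tmin \<le> tau j" using tau_pos by (auto simp: tmin_def)
  have "beta * tmin * B^2 * (d $ col)^2 \<le> curv xb Gam d" if "xb \<in> X" for xb Gam d col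
  proof -
    obtain j r where "P j $ r = axis col 1" using P_cover by blast
    then have "(P j *v d) $ r = d $ col" by (simp add: matrix_vector_mul_component inner_axis')
    then have "B * \<bar>d $ col\<bar> \<le> B * norm (P j *v d)"
      using B(1) component_le_norm_cart[of "P j *v d" r] by simp
    also have "\<dots> \<le> norm (Om (Gam j) *v (P j *v d))" by (rule B(2))
    finally have "(B * \<bar>d $ col\<bar>)^2 \<le> (norm (Om (Gam j) *v (P j *v d)))^2"
      using B(1) by (intro power_mono) auto
    then have "B^2 * (d $ col)^2 \<le> (norm (Om (Gam j) *v (P j *v d)))^2"
      by (simp add: power_mult_distrib)
    then have "tmin * (B^2 * (d $ col)^2) \<le> tau j * (norm (Om (Gam j) *v (P j *v d)))^2"
      using tmin tau_pos by (intro mult_mono) (auto simp: less_imp_le)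
    also have "\<dots> \<le> (\<Sum>j\<in>UNIV. tau j * (norm (Om (Gam j) *v (P j *v d)))^2)"
      using tau_pos by (intro member_le_sum) (auto simp: less_imp_le)
    finally have "beta * (tmin * (B^2 * (d $ col)^2))
        \<le> beta * (\<Sum>j\<in>UNIV. tau j * (norm (Om (Gam j) *v (P j *v d)))^2)"
      using beta_pos by simp
    then show ?thesis using curv_ge_transform_term[OF that, of Gam d] unfolding mult.assoc by linarith
  qed
  moreover have "beta * tmin * B^2 > 0" using beta_pos tmin B by simp
  ultimately show ?thesis by blast
qed

lemma curv_coercive: "\<exists>\<kappa>>0. \<forall>xb\<in>X. \<forall>Gam d. \<kappa> * (norm d)^2 \<le> curv xb Gam d"
proof -
  obtain \<kappa> where \<kappa>: "\<kappa> > 0" "\<And>xb Gam d col. xb \<in> X \<Longrightarrow> \<kappa> * (d $ col)^2 \<le> curv xb Gam d"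
    using curv_ge_coordinate by blast
  have "\<kappa> / CARD('p) * (norm d)^2 \<le> curv xb Gam d" if "xb \<in> X" for xb Gam d
  proof -
    have "(norm d)^2 = (\<Sum>col\<in>UNIV. (d $ col)^2)"
      unfolding power2_norm_eq_inner inner_vec_def by (simp add: power2_eq_square)
    then have "\<kappa> * (norm d)^2 = (\<Sum>col\<in>UNIV. \<kappa> * (d $ col)^2)"
      by (simp add: sum_distrib_left)
    also have "\<dots> \<le> (\<Sum>col\<in>(UNIV::'p set). curv xb Gam d)"
      using \<kappa>(2)[OF that] by (intro sum_mono) auto
    finally show ?thesis by (simp add: field_simps)
  qed
  then show ?thesis using \<kappa>(1) by (intro exI[of _ "\<kappa> / CARD('p)"]) auto
qed

lemma curv_nonneg: "xb \<in> X \<Longrightarrow> 0 \<le> curv xb Gam d"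
  using curv_coercive by (smt (verit) zero_le_mult_iff zero_le_power2)

lemma Fmaj_minimizer_unique:
  assumes "xb \<in> X" "a \<in> X" "b \<in> X"
    and "\<forall>w\<in>X. F a Z Gam xb \<le> F w Z Gam xb" "\<forall>w\<in>X. F b Z Gam xb \<le> F w Z Gam xb"
  shows "a = b"
proof -
  have "F a Z Gam xb + curv xb Gam (b - a) \<le> F b Z Gam xb"
    using Fmaj_minimizer_gap assms(2-4) .
  moreover have "F b Z Gam xb \<le> F a Z Gam xb" using assms(2,5) by blast
  moreover obtain \<kappa> where "\<kappa> > 0" "\<kappa> * (norm (b - a))^2 \<le> curv xb Gam (b - a)"
    using curv_coercive assms(1) by meson
  ultimately have "\<kappa> * (norm (b - a))^2 \<le> 0" by linarith
  with \<open>\<kappa> > 0\<close> show ?thesis by (simp add: mult_le_0_iff)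
qed

lemma Lfun_Rfun_le_Fmaj:
  assumes "y \<in> X" "xb \<in> X"
  shows "L y + R y Z Gam \<le> F y Z Gam xb"
proof -
  have "L y \<le> (\<Sum>i\<in>UNIV. qsurr I0 sig2 (Y i) (s1 i) (s2 i) (c i) (lproj A y i) (lproj A xb i))"
    unfolding Lfun_def using c_major lproj_nonneg[OF A_nonneg] assms by (intro sum_mono) blast
  then show ?thesis unfolding Fmaj_def by simp
qed

lemma Rfun_nonneg: "0 \<le> R y Z Gam"
  unfolding Rfun_def using beta_pos tau_pos
  by (intro mult_nonneg_nonneg sum_nonneg) (auto simp: less_imp_le)

lemma continuous_Lfun: "continuous_on S L"
proof -
  have "isCont (hfun I0 sig2 (Y i) (s1 i) (s2 i)) l" for i l
    using hfun_has_real_derivative[OF I0_pos sig2_nonneg] by (rule DERIV_isCont)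
  then show ?thesis
    unfolding Lfun_def[abs_def]
    by (intro continuous_on_sum continuous_on_compose2[OF continuous_at_imp_continuous_on continuous_lproj])
      auto
qed

lemma tendsto_Fmaj_smooth:
  assumes "a \<longlonglongrightarrow> a0" "b \<longlonglongrightarrow> b0" "\<forall>j. (\<lambda>m. Zm m j) \<longlonglongrightarrow> Z0 j"
    and "\<forall>m. b m \<in> X" "b0 \<in> X"
  shows "(\<lambda>m. F0 (a m) (Zm m) Gam (b m)) \<longlonglongrightarrow> F0 a0 Z0 Gam b0"
proof -
  have lb: "(\<lambda>m. lproj A (b m) i) \<longlonglongrightarrow> lproj A b0 i" for i
    by (rule tendsto_lproj[OF assms(2)])
  have "(\<lambda>m. c i (lproj A (b m) i)) \<longlonglongrightarrow> c i (lproj A b0 i)" for i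
    using lproj_nonneg[OF A_nonneg] assms(4,5)
    by (intro continuous_on_tendsto_compose[OF c_cont[rule_format] lb]) (auto intro!: always_eventually)
  moreover have "(\<lambda>m. h (lproj A (b m) i)) \<longlonglongrightarrow> h (lproj A b0 i)"
    if "\<And>l. isCont h l" for h :: "real \<Rightarrow> real" and i
    using isCont_tendsto_compose[OF that lb] .
  moreover note hfun_has_real_derivative[OF I0_pos sig2_nonneg, THEN DERIV_isCont]
    isCont_hfun_deriv[OF I0_pos sig2_nonneg]
  ultimately show ?thesis
    unfolding Fmaj_def Rfun_def qsurr_def deriv_hfun[OF I0_pos sig2_nonneg] zero_power2 mult_zero_left
      add_0_right
    using assms(3)
    by (intro tendsto_intros tendsto_lproj assms(1,2)
        bounded_linear.tendsto[OF matrix_vector_mul_bounded_linear]) auto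
qed

end

locale spultra_iteration = spultra_model A I0 sig2 Y s1 s2 c beta tau Om P gc xmax
  for A :: "real^'p^'d" and I0 sig2 :: real and Y s1 s2 :: "'d::finite \<Rightarrow> real"
    and c :: "'d \<Rightarrow> real \<Rightarrow> real" and beta :: real and tau :: "'j::finite \<Rightarrow> real"
    and Om :: "'k::finite \<Rightarrow> real^'v^'v" and P :: "'j \<Rightarrow> real^'p^'v" and gc xmax :: real +
  fixes x :: "nat \<Rightarrow> real^'p" and Z :: "nat \<Rightarrow> 'j \<Rightarrow> real^'v" and Gam :: "nat \<Rightarrow> 'j \<Rightarrow> 'k"
  assumes x0: "x 0 \<in> Xset xmax"
    and img_update: "\<forall>n. x (Suc n) \<in> Xset xmax \<and>
        (\<forall>y\<in>Xset xmax. Fmaj I0 sig2 Y s1 s2 c A beta tau Om P gc (x (Suc n)) (Z n) (Gam n) (x n)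
                      \<le> Fmaj I0 sig2 Y s1 s2 c A beta tau Om P gc y (Z n) (Gam n) (x n))"
    and sc_update: "\<forall>n Z' Gam'. Rfun beta tau Om P gc (x (Suc n)) (Z (Suc n)) (Gam (Suc n))
                      \<le> Rfun beta tau Om P gc (x (Suc n)) Z' Gam'"
begin

lemma x_in_X: "x n \<in> X"
  using x0 img_update by (cases n) auto

lemma objective_descent:
  "L (x (Suc n)) + R (x (Suc n)) (Z (Suc n)) (Gam (Suc n)) + curv (x n) (Gam n) (x n - x (Suc n))
   \<le> L (x n) + R (x n) (Z n) (Gam n)"
proof -
  have "\<forall>w\<in>X. F (x (Suc n)) (Z n) (Gam n) (x n) \<le> F w (Z n) (Gam n) (x n)"
    using img_update by blast
  then have "F (x (Suc n)) (Z n) (Gam n) (x n) + curv (x n) (Gam n) (x n - x (Suc n))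
      \<le> F (x n) (Z n) (Gam n) (x n)"
    by (rule Fmaj_minimizer_gap[OF x_in_X x_in_X])
  moreover have "R (x (Suc n)) (Z (Suc n)) (Gam (Suc n)) \<le> R (x (Suc n)) (Z n) (Gam n)"
    using sc_update by blast
  moreover have "L (x (Suc n)) + R (x (Suc n)) (Z n) (Gam n) \<le> F (x (Suc n)) (Z n) (Gam n) (x n)"
    by (rule Lfun_Rfun_le_Fmaj[OF x_in_X x_in_X])
  ultimately show ?thesis unfolding Fmaj_self by linarith
qed

lemma objective_bounded_below: "\<exists>lb. \<forall>n. lb \<le> L (x n) + R (x n) (Z n) (Gam n)"
proof -
  obtain xm where xm: "\<forall>y\<in>X. L xm \<le> L y"
    using continuous_attains_inf[OF compact_Xset _ continuous_Lfun] x_in_X by blast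
  have "L xm \<le> L (x n) + R (x n) (Z n) (Gam n)" for n
    using xm x_in_X[of n] Rfun_nonneg[of "x n" "Z n" "Gam n"] by fastforce
  then show ?thesis by blast
qed

lemma successive_differences_tendsto_zero: "(\<lambda>n. x n - x (Suc n)) \<longlonglongrightarrow> 0"
proof -
  obtain lb where lb: "\<forall>n. lb \<le> L (x n) + R (x n) (Z n) (Gam n)"
    using objective_bounded_below by blast
  have gaps: "(\<lambda>n. curv (x n) (Gam n) (x n - x (Suc n))) \<longlonglongrightarrow> 0"
    by (rule descent_gaps_tendsto_zero[where G = "\<lambda>n. L (x n) + R (x n) (Z n) (Gam n)"
          and C = "\<lambda>n. curv (x n) (Gam n) (x n - x (Suc n))", OF objective_descent
          curv_nonneg[OF x_in_X] lb[rule_format]])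
  obtain \<kappa> where \<kappa>: "\<kappa> > 0" "\<forall>xb\<in>X. \<forall>G d. \<kappa> * (norm d)^2 \<le> curv xb G d"
    using curv_coercive by blast
  have "(norm (x n - x (Suc n)))^2 \<le> curv (x n) (Gam n) (x n - x (Suc n)) / \<kappa>" for n
    using \<kappa> x_in_X[of n] by (simp add: pos_le_divide_eq mult.commute)
  then have "(\<lambda>n. (norm (x n - x (Suc n)))^2) \<longlonglongrightarrow> 0"
    by (intro tendsto_sandwich[OF _ _ tendsto_const tendsto_divide_zero[OF gaps]] always_eventually allI)
      simp_all
  then have "(\<lambda>n. sqrt ((norm (x n - x (Suc n)))^2)) \<longlonglongrightarrow> sqrt 0"
    by (rule tendsto_real_sqrt)
  then show ?thesis by (simp add: tendsto_norm_zero_iff)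
qed

lemma subsequence_limit_in_X: "(\<lambda>m. x (q m)) \<longlonglongrightarrow> xs \<Longrightarrow> xs \<in> X"
  by (rule closed_sequentially[where f = "\<lambda>m. x (q m)", OF compact_imp_closed[OF compact_Xset] x_in_X])

text \<open>The shift \<open>q m - 1\<close> is truncated only while \<open>q m = 0\<close>, i.e. at \<open>m = 0\<close> at most.\<close>
lemma eventually_Suc_pred_subseq:
  assumes "strict_mono q"
  shows "\<forall>\<^sub>F m in sequentially. Suc (q m - 1) = q m"
proof -
  have "Suc (q m - 1) = q m" if "1 \<le> m" for m
    using seq_suble[OF assms, of m] that by simp
  then show ?thesis using eventually_ge_at_top by (rule eventually_mono[rotated])
qed

lemma predecessor_tendsto:
  assumes "strict_mono q" "(\<lambda>m. x (q m)) \<longlonglongrightarrow> xs"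
  shows "(\<lambda>m. x (q m - 1)) \<longlonglongrightarrow> xs"
proof -
  have "filterlim (\<lambda>m. q m - 1) sequentially sequentially"
    using filterlim_compose[OF filterlim_minus_const_nat_at_top filterlim_subseq[OF assms(1)]] .
  then have "(\<lambda>m. x (q m - 1) - x (Suc (q m - 1))) \<longlonglongrightarrow> 0"
    using filterlim_compose[OF successive_differences_tendsto_zero] by blast
  moreover have "\<forall>\<^sub>F m in sequentially. x (q m) = x (Suc (q m - 1))"
    using eventually_Suc_pred_subseq[OF assms(1)] by (rule eventually_mono) simp
  then have "(\<lambda>m. x (Suc (q m - 1))) \<longlonglongrightarrow> xs"
    by (rule Lim_transform_eventually[OF assms(2)])
  ultimately have "(\<lambda>m. x (Suc (q m - 1)) + (x (q m - 1) - x (Suc (q m - 1)))) \<longlonglongrightarrow> xs + 0"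
    by (intro tendsto_add)
  then show ?thesis by simp
qed

lemma subsequence_limit_minimizes:
  assumes q: "strict_mono q" and conv_x: "(\<lambda>m. x (q m)) \<longlonglongrightarrow> xs"
    and conv_Z: "\<forall>j. (\<lambda>m. Z (q m - 1) j) \<longlonglongrightarrow> Zss j"
    and conv_Gam: "\<forall>j. \<forall>\<^sub>F m in sequentially. Gam (q m - 1) j = Gss j"
    and "w \<in> X"
  shows "F xs Zss Gss xs \<le> F w Zss Gss xs"
proof -
  have "\<forall>\<^sub>F m in sequentially. Gam (q m - 1) = Gss"
    using eventually_all_finite[of "\<lambda>m j. Gam (q m - 1) j = Gss j"] conv_Gam
    by (simp add: fun_eq_iff)
  then have "\<forall>\<^sub>F m in sequentially.
      F0 (x (q m)) (Z (q m - 1)) Gss (x (q m - 1)) \<le> F0 w (Z (q m - 1)) Gss (x (q m - 1))"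
    using eventually_Suc_pred_subseq[OF q]
  proof eventually_elim
    case (elim m)
    have "F (x (Suc (q m - 1))) (Z (q m - 1)) (Gam (q m - 1)) (x (q m - 1))
        \<le> F w (Z (q m - 1)) (Gam (q m - 1)) (x (q m - 1))"
      using img_update \<open>w \<in> X\<close> by blast
    then show ?case
      unfolding elim Fmaj_eq_smooth_plus_sparsity[where gc = gc and y = w]
        Fmaj_eq_smooth_plus_sparsity[where gc = gc and y = "x (q m)"]
      by simp
  qed
  moreover have lim: "(\<lambda>m. F0 (a m) (Z (q m - 1)) Gss (x (q m - 1))) \<longlonglongrightarrow> F0 a0 Zss Gss xs"
    if "a \<longlonglongrightarrow> a0" for a a0
    using that predecessor_tendsto[OF q conv_x] conv_Z x_in_X subsequence_limit_in_X[OF conv_x]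
    by (intro tendsto_Fmaj_smooth) auto
  ultimately have "F0 xs Zss Gss xs \<le> F0 w Zss Gss xs"
    by (intro tendsto_le[OF _ lim[OF tendsto_const] lim[OF conv_x]]) auto
  then show ?thesis
    unfolding Fmaj_eq_smooth_plus_sparsity[where gc = gc and y = w]
      Fmaj_eq_smooth_plus_sparsity[where gc = gc and y = xs]
    by simp
qed

end


theorem lemma1:
  fixes A :: "real^'p^'d"
    and I0 sig2 xmax beta gc :: real
    and Y s1 s2 :: "'d \<Rightarrow> real"
    and c :: "'d \<Rightarrow> real \<Rightarrow> real"
    and P :: "'j::finite \<Rightarrow> real^'p^'v"
    and Om :: "'k::finite \<Rightarrow> real^'v^'v"
    and tau :: "'j \<Rightarrow> real"
    and x :: "nat \<Rightarrow> real^'p"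
    and Z :: "nat \<Rightarrow> 'j \<Rightarrow> real^'v"
    and Gam :: "nat \<Rightarrow> 'j \<Rightarrow> 'k"
    and q :: "nat \<Rightarrow> nat"
    and xs :: "real^'p"
    and Zss :: "'j \<Rightarrow> real^'v"
    and Gss :: "'j \<Rightarrow> 'k"
  assumes A_nonneg: "\<forall>i col. 0 \<le> A $ i $ col"
    and I0_pos: "I0 > 0" and sig2_nonneg: "sig2 \<ge> 0" and xmax_pos: "xmax > 0"
    and beta_pos: "beta > 0" and gc_pos: "gc > 0" and tau_pos: "\<forall>j. tau j > 0"
    and P_rowsel: "\<forall>j r. \<exists>col. P j $ r = axis col 1"
    and P_cover: "\<forall>col. \<exists>j r. P j $ r = axis col 1"
    and Om_inv: "\<forall>k. invertible (Om k)"
    and c_cont: "\<forall>i. continuous_on {0..} (c i)"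
    and c_pos: "\<forall>i l. 0 \<le> l \<longrightarrow> c i l > 0"
    and c_major: "\<forall>i l lb. 0 \<le> l \<longrightarrow> 0 \<le> lb \<longrightarrow>
        hfun I0 sig2 (Y i) (s1 i) (s2 i) l \<le> qsurr I0 sig2 (Y i) (s1 i) (s2 i) (c i) l lb"
    and x0: "x 0 \<in> Xset xmax"
    and img_update: "\<forall>n. x (Suc n) \<in> Xset xmax \<and>
        (\<forall>y\<in>Xset xmax. Fmaj I0 sig2 Y s1 s2 c A beta tau Om P gc (x (Suc n)) (Z n) (Gam n) (x n)
                      \<le> Fmaj I0 sig2 Y s1 s2 c A beta tau Om P gc y (Z n) (Gam n) (x n))"
    and sc_update: "\<forall>n Z' Gam'. Rfun beta tau Om P gc (x (Suc n)) (Z (Suc n)) (Gam (Suc n))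
                      \<le> Rfun beta tau Om P gc (x (Suc n)) Z' Gam'"
    and q_mono: "strict_mono q"
    and conv_x: "(\<lambda>m. x (q m)) \<longlonglongrightarrow> xs"
    and conv_Z: "\<forall>j. (\<lambda>m. Z (q m - 1) j) \<longlonglongrightarrow> Zss j"
    and conv_Gam: "\<forall>j. eventually (\<lambda>m. Gam (q m - 1) j = Gss j) sequentially"
  shows "(\<lambda>m. x (q m - 1)) \<longlonglongrightarrow> xs \<and>
         {y \<in> Xset xmax. \<forall>w\<in>Xset xmax.
            Fmaj I0 sig2 Y s1 s2 c A beta tau Om P gc y Zss Gss xs
            \<le> Fmaj I0 sig2 Y s1 s2 c A beta tau Om P gc w Zss Gss xs} = {xs}"
proof -
  interpret spultra_iteration A I0 sig2 Y s1 s2 c beta tau Om P gc xmax x Z Gam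
    by unfold_locales (fact assms)+
  have xs: "xs \<in> X"
    by (rule subsequence_limit_in_X[OF conv_x])
  have min: "\<forall>w\<in>X. F xs Zss Gss xs \<le> F w Zss Gss xs"
    using subsequence_limit_minimizes[OF q_mono conv_x conv_Z conv_Gam] by blast
  have "{y \<in> X. \<forall>w\<in>X. F y Zss Gss xs \<le> F w Zss Gss xs} = {xs}"
    using Fmaj_minimizer_unique[OF xs _ xs _ min] xs min by blast
  with predecessor_tendsto[OF q_mono conv_x] show ?thesis by simp
qed

end
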